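(* Let $X$ be a smooth projective split toric variety over $\mathbb{Q}$ with $-K_X$ globally generated, $r=\operatorname{rank}\operatorname{Pic}(X)$. Let $\phi\in\mathbb{Z}[x_\rho:\rho\in\Delta(1)]$ be a non-zero polynomial and $\mathcal{A}_\phi(B)=\{\mathbf{X}\in\mathcal{A}(B):\phi(\mathbf{X})=0\}$. Then, uniformly in $\phi$, $$\#\mathcal{A}_\phi(B)\ll B(\log B)^{r-2}\log\log B+(\deg\phi)\,B(\log B)^{r-2}.$$
   Context: $X$ is defined by a complete regular fan $\Delta$ in $N_\mathbb{R}$ ($N\cong\mathbb{Z}^{\dim X}$, $M$ its dual); $\Delta(1)$ is the set of rays with primitive generators $n_\rho$, $\Delta_{\max}$ the maximal cones. For $\sigma\in\Delta_{\max}$, $m_\sigma\in M$ is the unique element with $\langle m_\sigma,n_\rho\rangle=1$ for all rays $\rho$ of $\sigma$, and $a_\rho(\sigma)=1-\langle m_\sigma,n_\rho\rangle\ge0$. For $\mathbf{X}=(X_\rho)$ with positive entries, $\mathbf{X}^{D_0(\sigma)}=\prod_\rho X_\rho^{a_\rho(\sigma)}$, and $\mathcal{A}(B)=\{\mathbf{X}\in\mathbb{Z}_{\ge1}^{\Delta(1)}:\max_{\sigma\in\Delta_{\max}}\mathbf{X}^{D_0(\sigma)}\le B\}$. *)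

theory Defs
  imports "HOL-Analysis.Analysis"
begin

text \<open>Lattice N = int^'n (dual M identified with int^'n via the standard pairing).\<close>

definition pair :: "int ^ 'n \<Rightarrow> int ^ 'n \<Rightarrow> int" where
  "pair m v = (\<Sum>i\<in>UNIV. m $ i * v $ i)"

definition rvec :: "int ^ 'n \<Rightarrow> real ^ 'n" where
  "rvec v = (\<chi> i. real_of_int (v $ i))"

definition cone_of :: "('r \<Rightarrow> int ^ 'n) \<Rightarrow> 'r set \<Rightarrow> (real ^ 'n) set" where
  "cone_of gen S = {(\<Sum>\<rho>\<in>S. c \<rho> *\<^sub>R rvec (gen \<rho>)) | c. \<forall>\<rho>\<in>S. c \<rho> \<ge> 0}"

definition primitive :: "int ^ 'n \<Rightarrow> bool" where
  "primitive v \<longleftrightarrow> v \<noteq> 0 \<and> (\<forall>(k::int) w. v = k *s w \<longrightarrow> k = 1 \<or> k = -1)"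

definition lattice_basis :: "('r \<Rightarrow> int ^ 'n) \<Rightarrow> 'r set \<Rightarrow> bool" where
  "lattice_basis gen S \<longleftrightarrow> inj_on gen S \<and>
     (\<forall>v. \<exists>c. v = (\<Sum>\<rho>\<in>S. c \<rho> *s gen \<rho>)) \<and>
     (\<forall>c. (\<Sum>\<rho>\<in>S. c \<rho> *s gen \<rho>) = 0 \<longrightarrow> (\<forall>\<rho>\<in>S. c \<rho> = 0))"

definition complete_regular_fan :: "('r::finite \<Rightarrow> int ^ 'n::finite) \<Rightarrow> 'r set set \<Rightarrow> bool" where
  "complete_regular_fan gen Dmax \<longleftrightarrow>
     inj gen \<and> (\<forall>\<rho>. primitive (gen \<rho>)) \<and>
     (\<forall>\<rho>. \<exists>\<sigma>\<in>Dmax. \<rho> \<in> \<sigma>) \<and>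
     (\<forall>\<sigma>\<in>Dmax. lattice_basis gen \<sigma>) \<and>
     (\<forall>\<sigma>\<in>Dmax. \<forall>\<tau>\<in>Dmax. cone_of gen \<sigma> \<inter> cone_of gen \<tau> = cone_of gen (\<sigma> \<inter> \<tau>)) \<and>
     (\<Union>\<sigma>\<in>Dmax. cone_of gen \<sigma>) = UNIV"

text \<open>Projectivity: existence of an ample T-divisor sum d_rho D_rho, i.e. a strictly convex
support function (standard criterion for complete smooth fans).\<close>
definition projective_fan :: "('r::finite \<Rightarrow> int ^ 'n::finite) \<Rightarrow> 'r set set \<Rightarrow> bool" where
  "projective_fan gen Dmax \<longleftrightarrow>
     (\<exists>d::'r \<Rightarrow> int. \<forall>\<sigma>\<in>Dmax. \<exists>m. (\<forall>\<rho>\<in>\<sigma>. pair m (gen \<rho>) = - d \<rho>) \<and>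
                                  (\<forall>\<rho>. \<rho> \<notin> \<sigma> \<longrightarrow> pair m (gen \<rho>) > - d \<rho>))"

definition m_sigma :: "('r \<Rightarrow> int ^ 'n) \<Rightarrow> 'r set \<Rightarrow> int ^ 'n" where
  "m_sigma gen \<sigma> = (THE m. \<forall>\<rho>\<in>\<sigma>. pair m (gen \<rho>) = 1)"

text \<open>-K_X globally generated: the anticanonical support function is convex.\<close>
definition anticanonical_gg :: "('r::finite \<Rightarrow> int ^ 'n::finite) \<Rightarrow> 'r set set \<Rightarrow> bool" where
  "anticanonical_gg gen Dmax \<longleftrightarrow>
     (\<forall>\<sigma>\<in>Dmax. \<forall>m. (\<forall>\<rho>\<in>\<sigma>. pair m (gen \<rho>) = 1) \<longrightarrow> (\<forall>\<rho>. pair m (gen \<rho>) \<le> 1))"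

definition a_coef :: "('r \<Rightarrow> int ^ 'n) \<Rightarrow> 'r set \<Rightarrow> 'r \<Rightarrow> int" where
  "a_coef gen \<sigma> \<rho> = 1 - pair (m_sigma gen \<sigma>) (gen \<rho>)"

definition monD0 :: "('r::finite \<Rightarrow> int ^ 'n) \<Rightarrow> 'r set \<Rightarrow> ('r \<Rightarrow> nat) \<Rightarrow> real" where
  "monD0 gen \<sigma> X = (\<Prod>\<rho>\<in>UNIV. real (X \<rho>) ^ nat (a_coef gen \<sigma> \<rho>))"

definition A_set :: "('r::finite \<Rightarrow> int ^ 'n) \<Rightarrow> 'r set set \<Rightarrow> real \<Rightarrow> ('r \<Rightarrow> nat) set" where
  "A_set gen Dmax B = {X. (\<forall>\<rho>. X \<rho> \<ge> 1) \<and> Max ((\<lambda>\<sigma>. monD0 gen \<sigma> X) ` Dmax) \<le> B}"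

text \<open>Multivariate integer polynomials in variables indexed by 'r:
coefficient functions on exponent vectors with finite support.\<close>
definition is_mpoly :: "(('r \<Rightarrow> nat) \<Rightarrow> int) \<Rightarrow> bool" where
  "is_mpoly \<phi> \<longleftrightarrow> finite {\<alpha>. \<phi> \<alpha> \<noteq> 0}"

definition mpoly_eval :: "(('r::finite \<Rightarrow> nat) \<Rightarrow> int) \<Rightarrow> ('r \<Rightarrow> nat) \<Rightarrow> int" where
  "mpoly_eval \<phi> X = (\<Sum>\<alpha>\<in>{\<alpha>. \<phi> \<alpha> \<noteq> 0}. \<phi> \<alpha> * (\<Prod>\<rho>\<in>UNIV. int (X \<rho>) ^ \<alpha> \<rho>))"

definition mpoly_degree :: "(('r::finite \<Rightarrow> nat) \<Rightarrow> int) \<Rightarrow> nat" where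
  "mpoly_degree \<phi> = Max ((\<lambda>\<alpha>. \<Sum>\<rho>\<in>UNIV. \<alpha> \<rho>) ` {\<alpha>. \<phi> \<alpha> \<noteq> 0})"

definition A_phi :: "('r::finite \<Rightarrow> int ^ 'n) \<Rightarrow> 'r set set \<Rightarrow> (('r \<Rightarrow> nat) \<Rightarrow> int) \<Rightarrow> real \<Rightarrow> ('r \<Rightarrow> nat) set" where
  "A_phi gen Dmax \<phi> B = {X \<in> A_set gen Dmax B. mpoly_eval \<phi> X = 0}"

end

theory Submission
  imports Defs
    "HOL-Library.Discrete_Functions"
    "HOL-Computational_Algebra.Polynomial"
    "HOL-Library.Landau_Symbols"
    "HOL-Real_Asymp.Real_Asymp"
begin

text \<open>
  Let \<open>S \<subseteq> \<nat>^\<Delta>(1)\<close> be finite and closed under resetting one coordinate to \<open>1\<close>, as \<open>A(B)\<close> is.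
  Expanding \<open>\<phi>\<close> in a variable \<open>x\<^sub>\<rho>\<close> with leading coefficient \<open>\<psi>\<close> of degree \<open>e\<close>, a zero of
  \<open>\<phi>\<close> in \<open>S\<close> is either a zero of \<open>\<psi>\<close>, which has smaller total degree, or lies on a line
  \<open>{Y(\<rho> := y)}\<close> through some \<open>Y \<in> S\<close> with \<open>Y\<^sub>\<rho> = 1\<close> on which \<open>\<phi>\<close> is a nonzero polynomial of
  degree \<open>e\<close>. By induction, \<open>#{X \<in> S. \<phi>(X) = 0} \<le> deg \<phi> \<cdot> \<Sum>\<^sub>\<rho> #{X \<in> S. X\<^sub>\<rho> = 1}\<close>.

  The points of \<open>A(B)\<close> with \<open>X\<^sub>\<rho>\<^sub>0 = 1\<close> lie in dyadic boxes \<open>\<Prod>\<^sub>\<rho> [2^k\<^sub>\<rho>, 2^(k\<^sub>\<rho>+1))\<close> with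
  \<open>k\<^sub>\<rho>\<^sub>0 = 0\<close> and \<open>\<Sum>\<^sub>\<rho> a\<^sub>\<rho>(\<sigma>) k\<^sub>\<rho> \<le> L = \<lfloor>log\<^sub>2 B\<rfloor>\<close> for all \<open>\<sigma>\<close>. Writing \<open>-\<Sum> k\<^sub>\<rho> n\<^sub>\<rho>\<close> in a
  maximal cone shows \<open>|k| \<le> L\<close> and \<open>\<Sum> k\<^sub>\<rho> n\<^sub>\<rho> = O(L - |k|)\<close>. Fix a maximal cone \<open>\<sigma>\<^sub>0\<close> with
  \<open>\<rho>\<^sub>0 \<notin> \<sigma>\<^sub>0\<close>. If \<open>a\<^sub>\<rho>\<^sub>1(\<sigma>\<^sub>0) \<noteq> 0\<close> for some \<open>\<rho>\<^sub>1 \<notin> \<sigma>\<^sub>0 \<union> {\<rho>\<^sub>0}\<close>, then \<open>k\<close> is determined by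
  \<open>|k|\<close>, \<open>\<Sum> k\<^sub>\<rho> n\<^sub>\<rho>\<close> and its at most \<open>r - 2\<close> coordinates outside \<open>\<sigma>\<^sub>0 \<union> {\<rho>\<^sub>0, \<rho>\<^sub>1}\<close>, so
  the boxes contain \<open>O(2^L L^(r-2)) = O(B (log B)^(r-2))\<close> points. Otherwise \<open>|k| \<le> \<theta> L\<close> for a
  fixed \<open>\<theta> < 1\<close>, leaving only \<open>O(B^\<theta> (log B)^#\<Delta>(1))\<close> points. Hence
  \<open>#A\<^sub>\<phi>(B) = O(deg \<phi> \<cdot> B (log B)^(r-2))\<close>, which is stronger than the claim.
\<close>

section \<open>Zeros of integer polynomials on down-closed sets\<close>

definition monomial_eval :: "('r::finite \<Rightarrow> nat) \<Rightarrow> ('r \<Rightarrow> nat) \<Rightarrow> int" where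
  "monomial_eval \<alpha> X = (\<Prod>\<rho>\<in>UNIV. int (X \<rho>) ^ \<alpha> \<rho>)"

definition mpoly_support :: "(('r \<Rightarrow> nat) \<Rightarrow> int) \<Rightarrow> ('r \<Rightarrow> nat) set" where
  "mpoly_support \<phi> = {\<alpha>. \<phi> \<alpha> \<noteq> 0}"

definition mpoly_var_coeff :: "(('r \<Rightarrow> nat) \<Rightarrow> int) \<Rightarrow> 'r \<Rightarrow> nat \<Rightarrow> ('r \<Rightarrow> nat) \<Rightarrow> int" where
  "mpoly_var_coeff \<phi> \<rho> j \<beta> = (if \<beta> \<rho> = 0 then \<phi> (\<beta>(\<rho> := j)) else 0)"

definition mpoly_var_degree :: "(('r \<Rightarrow> nat) \<Rightarrow> int) \<Rightarrow> 'r \<Rightarrow> nat" where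
  "mpoly_var_degree \<phi> \<rho> = Max ((\<lambda>\<alpha>. \<alpha> \<rho>) ` mpoly_support \<phi>)"

lemma mpoly_eval_eq_sum_support:
  "mpoly_eval \<phi> X = (\<Sum>\<alpha>\<in>mpoly_support \<phi>. \<phi> \<alpha> * monomial_eval \<alpha> X)"
  by (simp add: mpoly_eval_def mpoly_support_def monomial_eval_def)

lemma monomial_eval_upd_exponent:
  assumes "\<beta> \<rho> = 0"
  shows "monomial_eval (\<beta>(\<rho> := j)) X = int (X \<rho>) ^ j * monomial_eval \<beta> X"
proof -
  have "monomial_eval (\<beta>(\<rho> := j)) X = int (X \<rho>) ^ j * (\<Prod>\<sigma>\<in>UNIV - {\<rho>}. int (X \<sigma>) ^ \<beta> \<sigma>)"
    unfolding monomial_eval_def by (subst prod.remove[of UNIV \<rho>]) (auto intro!: prod.cong)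
  also have "\<dots> = int (X \<rho>) ^ j * monomial_eval \<beta> X"
    unfolding monomial_eval_def using assms prod.remove[of UNIV \<rho> "\<lambda>\<sigma>. int (X \<sigma>) ^ \<beta> \<sigma>"] by simp
  finally show ?thesis .
qed

lemma monomial_eval_upd_point:
  "\<beta> \<rho> = 0 \<Longrightarrow> monomial_eval \<beta> (X(\<rho> := y)) = monomial_eval \<beta> X"
  unfolding monomial_eval_def by (intro prod.cong) auto

lemma is_mpoly_var_coeff:
  assumes "is_mpoly \<phi>"
  shows "is_mpoly (mpoly_var_coeff \<phi> \<rho> j)"
proof -
  have "{\<beta>. mpoly_var_coeff \<phi> \<rho> j \<beta> \<noteq> 0} \<subseteq> (\<lambda>\<alpha>. \<alpha>(\<rho> := 0)) ` {\<alpha>. \<phi> \<alpha> \<noteq> 0}"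
  proof
    fix \<beta> assume "\<beta> \<in> {\<beta>. mpoly_var_coeff \<phi> \<rho> j \<beta> \<noteq> 0}"
    then have "\<beta> \<rho> = 0" "\<phi> (\<beta>(\<rho> := j)) \<noteq> 0"
      by (auto simp: mpoly_var_coeff_def split: if_splits)
    then show "\<beta> \<in> (\<lambda>\<alpha>. \<alpha>(\<rho> := 0)) ` {\<alpha>. \<phi> \<alpha> \<noteq> 0}"
      by (intro image_eqI[of _ _ "\<beta>(\<rho> := j)"]) auto
  qed
  then show ?thesis
    using assms unfolding is_mpoly_def by (auto intro: finite_subset)
qed

lemma mpoly_eval_var_coeff_upd:
  "mpoly_eval (mpoly_var_coeff \<phi> \<rho> j) (X(\<rho> := y)) = mpoly_eval (mpoly_var_coeff \<phi> \<rho> j) X"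
  unfolding mpoly_eval_eq_sum_support
  by (intro sum.cong refl arg_cong2[where f = "(*)"] monomial_eval_upd_point)
     (auto simp: mpoly_support_def mpoly_var_coeff_def split: if_splits)

lemma mpoly_eval_expand_var:
  assumes "is_mpoly \<phi>" and "\<And>\<alpha>. \<phi> \<alpha> \<noteq> 0 \<Longrightarrow> \<alpha> \<rho> \<le> e"
  shows "mpoly_eval \<phi> X = (\<Sum>j\<le>e. mpoly_eval (mpoly_var_coeff \<phi> \<rho> j) X * int (X \<rho>) ^ j)"
proof -
  have layer: "mpoly_eval (mpoly_var_coeff \<phi> \<rho> j) X * int (X \<rho>) ^ j
             = (\<Sum>\<alpha>\<in>{\<alpha>\<in>mpoly_support \<phi>. \<alpha> \<rho> = j}. \<phi> \<alpha> * monomial_eval \<alpha> X)" for j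
  proof -
    have "mpoly_eval (mpoly_var_coeff \<phi> \<rho> j) X * int (X \<rho>) ^ j
        = (\<Sum>\<beta>\<in>mpoly_support (mpoly_var_coeff \<phi> \<rho> j). \<phi> (\<beta>(\<rho> := j)) * monomial_eval (\<beta>(\<rho> := j)) X)"
      unfolding mpoly_eval_eq_sum_support sum_distrib_right
      by (intro sum.cong refl)
         (auto simp: mpoly_support_def mpoly_var_coeff_def monomial_eval_upd_exponent
               split: if_splits)
    also have "\<dots> = (\<Sum>\<alpha>\<in>{\<alpha>\<in>mpoly_support \<phi>. \<alpha> \<rho> = j}. \<phi> \<alpha> * monomial_eval \<alpha> X)"
      by (rule sum.reindex_bij_witness[where i = "\<lambda>\<alpha>. \<alpha>(\<rho> := 0)" and j = "\<lambda>\<beta>. \<beta>(\<rho> := j)"])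
         (auto simp: mpoly_support_def mpoly_var_coeff_def split: if_splits)
    finally show ?thesis .
  qed
  have "mpoly_eval \<phi> X = (\<Sum>j\<le>e. \<Sum>\<alpha>\<in>{\<alpha>\<in>mpoly_support \<phi>. \<alpha> \<rho> = j}. \<phi> \<alpha> * monomial_eval \<alpha> X)"
    unfolding mpoly_eval_eq_sum_support using assms
    by (subst sum.group[symmetric, where g = "\<lambda>\<alpha>. \<alpha> \<rho>" and T = "{..e}"])
       (auto simp: is_mpoly_def mpoly_support_def)
  then show ?thesis by (simp add: layer)
qed

lemma card_zeros_on_line_le:
  assumes "is_mpoly \<phi>" and "\<And>\<alpha>. \<phi> \<alpha> \<noteq> 0 \<Longrightarrow> \<alpha> \<rho> \<le> e"
    and "mpoly_eval (mpoly_var_coeff \<phi> \<rho> e) Y \<noteq> 0"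
  shows "finite {y. mpoly_eval \<phi> (Y(\<rho> := y)) = 0}"
    and "card {y. mpoly_eval \<phi> (Y(\<rho> := y)) = 0} \<le> e"
proof -
  define p where "p = (\<Sum>j\<le>e. monom (mpoly_eval (mpoly_var_coeff \<phi> \<rho> j) Y) j)"
  have poly_p: "poly p (int y) = mpoly_eval \<phi> (Y(\<rho> := y))" for y
    using mpoly_eval_expand_var[OF assms(1,2), where X = "Y(\<rho> := y)"]
    by (simp add: p_def poly_sum poly_monom mpoly_eval_var_coeff_upd)
  have "coeff p e = mpoly_eval (mpoly_var_coeff \<phi> \<rho> e) Y"
    by (simp add: p_def coeff_sum)
  then have "p \<noteq> 0" using assms(3) by auto
  have "degree p \<le> e"
    unfolding p_def by (rule degree_sum_le) (auto intro: order_trans[OF degree_monom_le])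
  have "{y. mpoly_eval \<phi> (Y(\<rho> := y)) = 0} = int -` {x. poly p x = 0}"
    by (auto simp: poly_p)
  then show "finite {y. mpoly_eval \<phi> (Y(\<rho> := y)) = 0}"
    using poly_roots_finite[OF \<open>p \<noteq> 0\<close>] by (metis finite_vimageI inj_of_nat)
  have "card {y. mpoly_eval \<phi> (Y(\<rho> := y)) = 0} \<le> card {x. poly p x = 0}"
    using poly_roots_finite[OF \<open>p \<noteq> 0\<close>]
    by (intro card_inj_on_le[where f = int]) (auto simp: poly_p)
  also have "\<dots> \<le> degree p" by (rule card_poly_roots_bound[OF \<open>p \<noteq> 0\<close>])
  finally show "card {y. mpoly_eval \<phi> (Y(\<rho> := y)) = 0} \<le> e" using \<open>degree p \<le> e\<close> by simp
qed

lemma card_zeros_var_coeff_nonzero_le: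
  fixes S :: "('r::finite \<Rightarrow> nat) set"
  assumes "finite S" and down: "\<And>X. X \<in> S \<Longrightarrow> X(\<rho> := 1) \<in> S"
    and "is_mpoly \<phi>" and "\<And>\<alpha>. \<phi> \<alpha> \<noteq> 0 \<Longrightarrow> \<alpha> \<rho> \<le> e"
  shows "card {X\<in>S. mpoly_eval (mpoly_var_coeff \<phi> \<rho> e) X \<noteq> 0 \<and> mpoly_eval \<phi> X = 0}
           \<le> e * card {X\<in>S. X \<rho> = 1}"
proof -
  define T where "T = {Y\<in>S. Y \<rho> = 1 \<and> mpoly_eval (mpoly_var_coeff \<phi> \<rho> e) Y \<noteq> 0}"
  define line_zeros where "line_zeros Y = (\<lambda>y. Y(\<rho> := y)) ` {y. mpoly_eval \<phi> (Y(\<rho> := y)) = 0}" for Y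
  have "finite T" using \<open>finite S\<close> by (simp add: T_def)
  have line_zeros: "finite (line_zeros Y)" "card (line_zeros Y) \<le> e" if "Y \<in> T" for Y
  proof -
    have "inj (\<lambda>y. Y(\<rho> := y))" by (rule injI) (metis fun_upd_same)
    then have "card (line_zeros Y) = card {y. mpoly_eval \<phi> (Y(\<rho> := y)) = 0}"
      unfolding line_zeros_def by (simp add: card_image inj_on_subset)
    then show "finite (line_zeros Y)" "card (line_zeros Y) \<le> e"
      using card_zeros_on_line_le[of \<phi> \<rho> e Y] assms(3,4) that
      by (simp_all add: T_def line_zeros_def)
  qed
  have "{X\<in>S. mpoly_eval (mpoly_var_coeff \<phi> \<rho> e) X \<noteq> 0 \<and> mpoly_eval \<phi> X = 0} \<subseteq> (\<Union>Y\<in>T. line_zeros Y)"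
  proof
    fix X assume X: "X \<in> {X\<in>S. mpoly_eval (mpoly_var_coeff \<phi> \<rho> e) X \<noteq> 0 \<and> mpoly_eval \<phi> X = 0}"
    have "X(\<rho> := 1) \<in> T"
      using X down mpoly_eval_var_coeff_upd[of \<phi> \<rho> e X 1] by (simp add: T_def)
    moreover have "X \<in> line_zeros (X(\<rho> := 1))"
      unfolding line_zeros_def using X by (intro image_eqI[of _ _ "X \<rho>"]) auto
    ultimately show "X \<in> (\<Union>Y\<in>T. line_zeros Y)" by blast
  qed
  then have "card {X\<in>S. mpoly_eval (mpoly_var_coeff \<phi> \<rho> e) X \<noteq> 0 \<and> mpoly_eval \<phi> X = 0}
      \<le> card (\<Union>Y\<in>T. line_zeros Y)"
    using \<open>finite T\<close> line_zeros(1) by (intro card_mono) auto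
  also have "\<dots> \<le> (\<Sum>Y\<in>T. card (line_zeros Y))" by (rule card_UN_le[OF \<open>finite T\<close>])
  also have "\<dots> \<le> e * card T"
    using sum_bounded_above[of T "\<lambda>Y. card (line_zeros Y)" e] line_zeros(2)
    by (simp add: mult.commute)
  also have "\<dots> \<le> e * card {X\<in>S. X \<rho> = 1}"
    using \<open>finite S\<close> by (intro mult_left_mono card_mono) (auto simp: T_def)
  finally show ?thesis .
qed

lemma card_mpoly_zeros_le_var_coeff:
  fixes S :: "('r::finite \<Rightarrow> nat) set"
  assumes "finite S" and "\<And>X. X \<in> S \<Longrightarrow> X(\<rho> := 1) \<in> S"
    and "is_mpoly \<phi>" and "\<And>\<alpha>. \<phi> \<alpha> \<noteq> 0 \<Longrightarrow> \<alpha> \<rho> \<le> e"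
  shows "card {X\<in>S. mpoly_eval \<phi> X = 0}
           \<le> card {X\<in>S. mpoly_eval (mpoly_var_coeff \<phi> \<rho> e) X = 0} + e * card {X\<in>S. X \<rho> = 1}"
proof -
  let ?\<psi> = "mpoly_var_coeff \<phi> \<rho> e"
  have "card {X\<in>S. mpoly_eval \<phi> X = 0}
      \<le> card ({X\<in>S. mpoly_eval ?\<psi> X = 0} \<union> {X\<in>S. mpoly_eval ?\<psi> X \<noteq> 0 \<and> mpoly_eval \<phi> X = 0})"
    using \<open>finite S\<close> by (intro card_mono) auto
  also have "\<dots> \<le> card {X\<in>S. mpoly_eval ?\<psi> X = 0}
                  + card {X\<in>S. mpoly_eval ?\<psi> X \<noteq> 0 \<and> mpoly_eval \<phi> X = 0}"
    by (rule card_Un_le)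
  also have "card {X\<in>S. mpoly_eval ?\<psi> X \<noteq> 0 \<and> mpoly_eval \<phi> X = 0} \<le> e * card {X\<in>S. X \<rho> = 1}"
    by (rule card_zeros_var_coeff_nonzero_le) (fact assms)+
  finally show ?thesis by simp
qed

lemma mpoly_degree_ge:
  "is_mpoly \<phi> \<Longrightarrow> \<phi> \<alpha> \<noteq> 0 \<Longrightarrow> (\<Sum>\<rho>\<in>UNIV. \<alpha> \<rho>) \<le> mpoly_degree \<phi>"
  unfolding mpoly_degree_def is_mpoly_def by (rule Max_ge) auto

lemma mpoly_degree_le:
  assumes "is_mpoly \<phi>" "\<exists>\<alpha>. \<phi> \<alpha> \<noteq> 0" "\<And>\<alpha>. \<phi> \<alpha> \<noteq> 0 \<Longrightarrow> (\<Sum>\<rho>\<in>UNIV. \<alpha> \<rho>) \<le> d"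
  shows "mpoly_degree \<phi> \<le> d"
  unfolding mpoly_degree_def using assms by (subst Max_le_iff) (auto simp: is_mpoly_def)

lemma mpoly_var_degree_ge:
  "is_mpoly \<phi> \<Longrightarrow> \<phi> \<alpha> \<noteq> 0 \<Longrightarrow> \<alpha> \<rho> \<le> mpoly_var_degree \<phi> \<rho>"
  unfolding mpoly_var_degree_def mpoly_support_def is_mpoly_def by (rule Max_ge) auto

lemma mpoly_var_degree_attained:
  assumes "is_mpoly \<phi>" "\<exists>\<alpha>. \<phi> \<alpha> \<noteq> 0"
  obtains \<alpha> where "\<phi> \<alpha> \<noteq> 0" "\<alpha> \<rho> = mpoly_var_degree \<phi> \<rho>"
proof -
  have "mpoly_var_degree \<phi> \<rho> \<in> (\<lambda>\<alpha>. \<alpha> \<rho>) ` mpoly_support \<phi>"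
    unfolding mpoly_var_degree_def using assms
    by (intro Max_in) (auto simp: is_mpoly_def mpoly_support_def)
  then show ?thesis using that by (auto simp: mpoly_support_def)
qed

lemma mpoly_var_degree_pos:
  assumes "is_mpoly \<phi>" "\<exists>\<alpha>. \<phi> \<alpha> \<noteq> 0" "mpoly_degree \<phi> > 0"
  obtains \<rho> where "mpoly_var_degree \<phi> \<rho> > 0"
proof -
  obtain \<alpha> where "\<phi> \<alpha> \<noteq> 0" "\<not> (\<Sum>\<rho>\<in>UNIV. \<alpha> \<rho>) \<le> 0"
    using mpoly_degree_le[OF assms(1,2), of 0] assms(3) by force
  then obtain \<rho> where "\<alpha> \<rho> > 0" by (metis le_zero_eq neq0_conv sum.neutral)
  then show ?thesis
    using mpoly_var_degree_ge[OF assms(1) \<open>\<phi> \<alpha> \<noteq> 0\<close>, of \<rho>] by (intro that[of \<rho>]) simp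
qed

lemma leading_var_coeff_nonzero:
  assumes "is_mpoly \<phi>" "\<exists>\<alpha>. \<phi> \<alpha> \<noteq> 0"
  shows "\<exists>\<beta>. mpoly_var_coeff \<phi> \<rho> (mpoly_var_degree \<phi> \<rho>) \<beta> \<noteq> 0"
proof -
  obtain \<alpha> where "\<phi> \<alpha> \<noteq> 0" "\<alpha> \<rho> = mpoly_var_degree \<phi> \<rho>"
    using mpoly_var_degree_attained[OF assms] .
  moreover have "\<alpha>(\<rho> := mpoly_var_degree \<phi> \<rho>) = \<alpha>"
    using \<open>\<alpha> \<rho> = mpoly_var_degree \<phi> \<rho>\<close> by auto
  ultimately have "mpoly_var_coeff \<phi> \<rho> (mpoly_var_degree \<phi> \<rho>) (\<alpha>(\<rho> := 0)) \<noteq> 0"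
    by (simp add: mpoly_var_coeff_def)
  then show ?thesis by blast
qed

lemma mpoly_degree_var_coeff_le:
  assumes "is_mpoly \<phi>" "\<exists>\<beta>. mpoly_var_coeff \<phi> \<rho> e \<beta> \<noteq> 0"
  shows "mpoly_degree (mpoly_var_coeff \<phi> \<rho> e) + e \<le> mpoly_degree \<phi>"
proof -
  have sum_le: "(\<Sum>\<sigma>\<in>UNIV. \<beta> \<sigma>) + e \<le> mpoly_degree \<phi>" if "mpoly_var_coeff \<phi> \<rho> e \<beta> \<noteq> 0" for \<beta>
  proof -
    have "\<beta> \<rho> = 0" "\<phi> (\<beta>(\<rho> := e)) \<noteq> 0"
      using that by (auto simp: mpoly_var_coeff_def split: if_splits)
    moreover have "(\<Sum>\<sigma>\<in>UNIV. (\<beta>(\<rho> := e)) \<sigma>) = e + (\<Sum>\<sigma>\<in>UNIV - {\<rho>}. \<beta> \<sigma>)"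
      by (subst sum.remove[of UNIV \<rho>]) (auto intro!: sum.cong)
    moreover have "(\<Sum>\<sigma>\<in>UNIV. \<beta> \<sigma>) = \<beta> \<rho> + (\<Sum>\<sigma>\<in>UNIV - {\<rho>}. \<beta> \<sigma>)"
      by (rule sum.remove) auto
    ultimately show ?thesis using mpoly_degree_ge[OF assms(1)] by fastforce
  qed
  then have "mpoly_degree (mpoly_var_coeff \<phi> \<rho> e) \<le> mpoly_degree \<phi> - e"
    by (intro mpoly_degree_le[OF is_mpoly_var_coeff[OF assms(1)] assms(2)]) fastforce
  moreover have "e \<le> mpoly_degree \<phi>" using assms(2) sum_le by (meson le_add2 le_trans)
  ultimately show ?thesis by simp
qed

lemma mpoly_eval_degree_0_nonzero:
  assumes "is_mpoly \<phi>" "\<exists>\<alpha>. \<phi> \<alpha> \<noteq> 0" "mpoly_degree \<phi> = 0"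
  shows "mpoly_eval \<phi> X \<noteq> 0"
proof -
  have "\<alpha> = (\<lambda>_. 0)" if "\<phi> \<alpha> \<noteq> 0" for \<alpha>
    using mpoly_degree_ge[OF assms(1) that] assms(3) by (simp add: fun_eq_iff)
  then have "mpoly_support \<phi> = {\<lambda>_. 0}"
    using assms(2) by (auto simp: mpoly_support_def)
  moreover from this have "\<phi> (\<lambda>_. 0) \<noteq> 0" by (auto simp: mpoly_support_def)
  ultimately show ?thesis by (simp add: mpoly_eval_eq_sum_support monomial_eval_def)
qed

lemma card_mpoly_zeros_le:
  fixes S :: "('r::finite \<Rightarrow> nat) set"
  assumes "finite S" and down: "\<And>X \<rho>. X \<in> S \<Longrightarrow> X(\<rho> := 1) \<in> S"
    and "is_mpoly \<phi>" "\<exists>\<alpha>. \<phi> \<alpha> \<noteq> 0"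
  shows "card {X\<in>S. mpoly_eval \<phi> X = 0} \<le> mpoly_degree \<phi> * (\<Sum>\<rho>\<in>UNIV. card {X\<in>S. X \<rho> = 1})"
  using assms(3,4)
proof (induction "mpoly_degree \<phi>" arbitrary: \<phi> rule: less_induct)
  case less
  define T where "T = (\<Sum>\<rho>\<in>UNIV. card {X\<in>S. X \<rho> = 1})"
  show ?case
  proof (cases "mpoly_degree \<phi> = 0")
    case True
    then show ?thesis using mpoly_eval_degree_0_nonzero[OF less.prems] by simp
  next
    case False
    then obtain \<rho> where "mpoly_var_degree \<phi> \<rho> > 0"
      using mpoly_var_degree_pos[OF less.prems] by blast
    define e where "e = mpoly_var_degree \<phi> \<rho>"
    have "e > 0" using \<open>mpoly_var_degree \<phi> \<rho> > 0\<close> by (simp add: e_def)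
    define \<psi> where "\<psi> = mpoly_var_coeff \<phi> \<rho> e"
    have \<psi>: "is_mpoly \<psi>" "\<exists>\<beta>. \<psi> \<beta> \<noteq> 0"
      unfolding \<psi>_def e_def
      by (rule is_mpoly_var_coeff[OF less.prems(1)], rule leading_var_coeff_nonzero[OF less.prems])
    have deg_\<psi>: "mpoly_degree \<psi> + e \<le> mpoly_degree \<phi>"
      using \<psi>(2) unfolding \<psi>_def by (rule mpoly_degree_var_coeff_le[OF less.prems(1)])
    have "card {X\<in>S. mpoly_eval \<phi> X = 0}
        \<le> card {X\<in>S. mpoly_eval \<psi> X = 0} + e * card {X\<in>S. X \<rho> = 1}"
      unfolding \<psi>_def e_def using \<open>finite S\<close> down less.prems(1) mpoly_var_degree_ge
      by (intro card_mpoly_zeros_le_var_coeff) auto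
    also have "card {X\<in>S. mpoly_eval \<psi> X = 0} \<le> mpoly_degree \<psi> * T"
      unfolding T_def using deg_\<psi> \<open>e > 0\<close> by (intro less.hyps \<psi>) simp
    also have "card {X\<in>S. X \<rho> = 1} \<le> T"
      unfolding T_def by (rule member_le_sum[where f = "\<lambda>\<rho>. card {X\<in>S. X \<rho> = 1}"]) auto
    finally have "card {X\<in>S. mpoly_eval \<phi> X = 0} \<le> (mpoly_degree \<psi> + e) * T"
      by (simp add: add_mult_distrib)
    then show ?thesis
      using mult_le_mono1[OF deg_\<psi>] unfolding T_def by (rule le_trans)
  qed
qed

section \<open>Lattice bases and maximal cones\<close>

lemma pair_sum_right: "pair m (\<Sum>\<rho>\<in>S. c \<rho> *s g \<rho>) = (\<Sum>\<rho>\<in>S. c \<rho> * pair m (g \<rho>))"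
  unfolding pair_def by (simp add: sum_distrib_left mult.left_commute sum.swap[of _ UNIV S])

lemma pair_diff_left: "pair (m - m') v = pair m v - pair m' v"
  by (simp add: pair_def sum_subtractf left_diff_distrib)

lemma pair_axis: "pair m (axis i 1) = m $ i"
  unfolding pair_def axis_def by (simp add: if_distrib cong: if_cong)

lemma inner_rvec: "rvec m \<bullet> rvec v = real_of_int (pair m v)"
  by (simp add: inner_vec_def rvec_def pair_def)

lemma rvec_uminus: "rvec (- v) = - rvec v"
  by (simp add: rvec_def vec_eq_iff)

lemma lattice_basis_coeffs_unique:
  assumes "lattice_basis gen \<sigma>" "finite \<sigma>"
    and "(\<Sum>\<rho>\<in>\<sigma>. c \<rho> *s gen \<rho>) = (\<Sum>\<rho>\<in>\<sigma>. d \<rho> *s gen \<rho>)" "\<rho> \<in> \<sigma>"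
  shows "c \<rho> = d \<rho>"
proof -
  have "(\<Sum>\<rho>\<in>\<sigma>. (c \<rho> - d \<rho>) *s gen \<rho>) = 0"
    using assms(3) by (simp add: vec_eq_iff left_diff_distrib sum_subtractf)
  then show ?thesis using assms(1,4) unfolding lattice_basis_def by fastforce
qed

lemma lattice_basis_pair_eq:
  assumes "lattice_basis gen \<sigma>" "\<forall>\<rho>\<in>\<sigma>. pair m (gen \<rho>) = pair m' (gen \<rho>)"
  shows "m = m'"
proof -
  have "pair (m - m') v = 0" for v
  proof -
    obtain c where "v = (\<Sum>\<rho>\<in>\<sigma>. c \<rho> *s gen \<rho>)"
      using assms(1) unfolding lattice_basis_def by blast
    then show ?thesis using assms(2) by (simp add: pair_sum_right pair_diff_left)
  qed
  then have "(m - m') $ i = 0" for i using pair_axis[of "m - m'" i] by simp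
  then show ?thesis by (simp add: vec_eq_iff)
qed

lemma lattice_basis_dual:
  assumes "lattice_basis gen \<sigma>" "finite \<sigma>"
  obtains f where "\<forall>\<rho>\<in>\<sigma>. pair f (gen \<rho>) = h \<rho>"
proof -
  have "\<forall>i. \<exists>c. axis i 1 = (\<Sum>\<rho>\<in>\<sigma>. c \<rho> *s gen \<rho>)"
    using assms(1) unfolding lattice_basis_def by blast
  then obtain C where C: "\<And>i. axis i 1 = (\<Sum>\<rho>\<in>\<sigma>. C i \<rho> *s gen \<rho>)"
    by metis
  define f where "f = (\<chi> i. \<Sum>\<rho>\<in>\<sigma>. C i \<rho> * h \<rho>)"
  have "pair f (gen \<tau>) = h \<tau>" if "\<tau> \<in> \<sigma>" for \<tau>
  proof -
    define a where "a \<rho> = (\<Sum>i\<in>UNIV. gen \<tau> $ i * C i \<rho>)" for \<rho>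
    have "(\<Sum>\<rho>\<in>\<sigma>. a \<rho> *s gen \<rho>) = (\<Sum>i\<in>UNIV. gen \<tau> $ i *s axis i 1)"
      unfolding a_def C by (simp add: vec_eq_iff sum_distrib_left sum_distrib_right
          sum.swap[of _ UNIV \<sigma>] mult.assoc)
    also have "\<dots> = gen \<tau>"
      by (simp add: vec_eq_iff axis_def if_distrib cong: if_cong)
    also have "\<dots> = (\<Sum>\<rho>\<in>\<sigma>. (if \<rho> = \<tau> then 1 else 0) *s gen \<rho>)"
      using that assms(2) by (simp add: sum.cong[of \<sigma> \<sigma> _ "\<lambda>\<rho>. if \<rho> = \<tau> then gen \<rho> else 0"])
    finally have a: "a \<rho> = (if \<rho> = \<tau> then 1 else 0)" if "\<rho> \<in> \<sigma>" for \<rho>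
      using that by (rule lattice_basis_coeffs_unique[OF assms])
    have "pair f (gen \<tau>) = (\<Sum>\<rho>\<in>\<sigma>. h \<rho> * a \<rho>)"
      unfolding pair_def f_def a_def
      by (simp add: sum_distrib_left sum_distrib_right sum.swap[of _ UNIV \<sigma>] mult_ac)
    also have "\<dots> = h \<tau>"
      using that assms(2) by (simp add: a if_distrib cong: if_cong)
    finally show ?thesis .
  qed
  then show ?thesis using that by blast
qed

locale regular_fan =
  fixes gen :: "'r::finite \<Rightarrow> int ^ 'n::finite" and Dmax :: "'r set set"
  assumes complete_regular: "complete_regular_fan gen Dmax"
begin

lemma lattice_basis_max_cone: "\<sigma> \<in> Dmax \<Longrightarrow> lattice_basis gen \<sigma>"
  using complete_regular by (simp add: complete_regular_fan_def)

lemma finite_max_cones: "finite Dmax"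
  by (rule finite_subset[of _ "Pow UNIV"]) auto

lemma max_cones_nonempty: "Dmax \<noteq> {}"
  using complete_regular by (auto simp: complete_regular_fan_def)

lemma exists_max_cone_containing: "\<exists>\<sigma>\<in>Dmax. rvec v \<in> cone_of gen \<sigma>"
  using complete_regular by (auto simp: complete_regular_fan_def)

lemma pair_m_sigma:
  assumes "\<sigma> \<in> Dmax" "\<rho> \<in> \<sigma>"
  shows "pair (m_sigma gen \<sigma>) (gen \<rho>) = 1"
proof -
  obtain f where "\<forall>\<rho>\<in>\<sigma>. pair f (gen \<rho>) = 1"
    using lattice_basis_dual[OF lattice_basis_max_cone[OF assms(1)], of "\<lambda>_. 1"] by auto
  then have "\<exists>!m. \<forall>\<rho>\<in>\<sigma>. pair m (gen \<rho>) = 1"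
    using lattice_basis_pair_eq[OF lattice_basis_max_cone[OF assms(1)]] by (metis (full_types))
  then show ?thesis
    unfolding m_sigma_def using theI'[of "\<lambda>m. \<forall>\<rho>\<in>\<sigma>. pair m (gen \<rho>) = 1"] assms(2) by blast
qed

lemma a_coef_eq_0: "\<sigma> \<in> Dmax \<Longrightarrow> \<rho> \<in> \<sigma> \<Longrightarrow> a_coef gen \<sigma> \<rho> = 0"
  by (simp add: a_coef_def pair_m_sigma)

lemma in_cone_of_max_cone:
  assumes "\<sigma> \<in> Dmax" "rvec v \<in> cone_of gen \<sigma>"
  obtains c where "\<forall>\<rho>\<in>\<sigma>. c \<rho> \<ge> 0" "rvec v = (\<Sum>\<rho>\<in>\<sigma>. c \<rho> *\<^sub>R rvec (gen \<rho>))"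
  using assms(2) unfolding cone_of_def by blast

text \<open>By completeness \<open>-n\<^sub>\<rho>\<close> lies in some maximal cone; that cone cannot contain \<open>\<rho>\<close>,
  since the coefficient of \<open>n\<^sub>\<rho>\<close> would be \<open>-1\<close>.\<close>
lemma exists_max_cone_avoiding: "\<exists>\<sigma>\<in>Dmax. \<rho>0 \<notin> \<sigma>"
proof (rule ccontr)
  assume none: "\<not> ?thesis"
  obtain \<sigma> where \<sigma>: "\<sigma> \<in> Dmax" "rvec (- gen \<rho>0) \<in> cone_of gen \<sigma>"
    using exists_max_cone_containing by blast
  then obtain c where c: "\<forall>\<rho>\<in>\<sigma>. c \<rho> \<ge> 0" "rvec (- gen \<rho>0) = (\<Sum>\<rho>\<in>\<sigma>. c \<rho> *\<^sub>R rvec (gen \<rho>))"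
    by (rule in_cone_of_max_cone)
  have "\<rho>0 \<in> \<sigma>" using none \<sigma>(1) by blast
  obtain f where f: "\<forall>\<rho>\<in>\<sigma>. pair f (gen \<rho>) = (if \<rho> = \<rho>0 then 1 else 0)"
    using lattice_basis_dual[OF lattice_basis_max_cone[OF \<sigma>(1)], of "\<lambda>\<rho>. if \<rho> = \<rho>0 then 1 else 0"]
    by auto
  have "-1 = rvec f \<bullet> rvec (- gen \<rho>0)"
    using f \<open>\<rho>0 \<in> \<sigma>\<close> by (simp add: rvec_uminus inner_rvec)
  also have "\<dots> = (\<Sum>\<rho>\<in>\<sigma>. c \<rho> * (if \<rho> = \<rho>0 then 1 else 0))"
    unfolding c(2) inner_sum_right using f by (intro sum.cong) (auto simp: inner_rvec)
  also have "\<dots> = c \<rho>0"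
    using \<open>\<rho>0 \<in> \<sigma>\<close> by (simp add: if_distrib cong: if_cong)
  finally show False using c(1) \<open>\<rho>0 \<in> \<sigma>\<close> by force
qed

lemma dim_le_card_max_cone:
  assumes "\<sigma> \<in> Dmax"
  shows "CARD('n) \<le> card \<sigma>"
proof -
  let ?W = "(\<lambda>\<rho>. rvec (gen \<rho>)) ` \<sigma>"
  have "rvec v \<in> span ?W" for v
  proof -
    obtain c where "v = (\<Sum>\<rho>\<in>\<sigma>. c \<rho> *s gen \<rho>)"
      using lattice_basis_max_cone[OF assms] unfolding lattice_basis_def by blast
    then have "rvec v = (\<Sum>\<rho>\<in>\<sigma>. real_of_int (c \<rho>) *\<^sub>R rvec (gen \<rho>))"
      by (simp add: rvec_def vec_eq_iff)
    also have "\<dots> \<in> span ?W"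
      by (intro span_sum span_scale span_base) auto
    finally show ?thesis .
  qed
  moreover have "Basis \<subseteq> range (rvec :: int ^ 'n \<Rightarrow> real ^ 'n)"
  proof
    fix b :: "real ^ 'n" assume "b \<in> Basis"
    then obtain i where "b = axis i 1" by (auto simp: Basis_vec_def)
    then have "b = rvec (axis i 1)" by (simp add: rvec_def axis_def vec_eq_iff)
    then show "b \<in> range rvec" by blast
  qed
  ultimately have "Basis \<subseteq> span ?W" by blast
  then have "UNIV \<subseteq> span ?W"
    by (metis span_Basis span_minimal subspace_span)
  then have "dim (UNIV :: (real ^ 'n) set) \<le> card ?W"
    by (intro dim_le_card) auto
  also have "\<dots> \<le> card \<sigma>" by (rule card_image_le) simp
  finally show ?thesis by simp
qed

definition gen_bound :: real where
  "gen_bound = 1 + (\<Sum>\<rho>\<in>UNIV. \<Sum>i\<in>UNIV. \<bar>real_of_int (gen \<rho> $ i)\<bar>)"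

lemma abs_gen_le_gen_bound: "\<bar>real_of_int (gen \<rho> $ i)\<bar> \<le> gen_bound"
proof -
  have "\<bar>real_of_int (gen \<rho> $ i)\<bar> \<le> (\<Sum>i\<in>UNIV. \<bar>real_of_int (gen \<rho> $ i)\<bar>)"
    by (rule member_le_sum) auto
  also have "\<dots> \<le> (\<Sum>\<rho>\<in>UNIV. \<Sum>i\<in>UNIV. \<bar>real_of_int (gen \<rho> $ i)\<bar>)"
    by (rule member_le_sum[where f = "\<lambda>\<rho>. \<Sum>i\<in>UNIV. \<bar>real_of_int (gen \<rho> $ i)\<bar>"])
       (auto intro: sum_nonneg)
  finally show ?thesis unfolding gen_bound_def by simp
qed

lemma gen_bound_ge_1: "gen_bound \<ge> 1"
  unfolding gen_bound_def by (simp add: sum_nonneg)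

definition ray_sum :: "('r \<Rightarrow> nat) \<Rightarrow> int ^ 'n" where
  "ray_sum k = (\<Sum>\<rho>\<in>UNIV. int (k \<rho>) *s gen \<rho>)"

lemma sum_eq_a_coef_sum_plus_pair:
  "int (\<Sum>\<rho>\<in>UNIV. k \<rho>) = (\<Sum>\<rho>\<in>UNIV. a_coef gen \<sigma> \<rho> * int (k \<rho>)) + pair (m_sigma gen \<sigma>) (ray_sum k)"
  by (simp add: ray_sum_def pair_sum_right a_coef_def sum.distrib[symmetric] algebra_simps)

text \<open>Write \<open>-ray_sum k\<close> as a nonnegative combination \<open>\<Sum> c\<^sub>\<rho> n\<^sub>\<rho>\<close> of the rays of a
  maximal cone \<open>\<sigma>\<close>; pairing with \<open>m\<^sub>\<sigma>\<close> shows that the total weight \<open>C = \<Sum> c\<^sub>\<rho>\<close> is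
  exactly the defect in the sum identity above.\<close>
lemma exists_max_cone_defect:
  obtains \<sigma> C where "\<sigma> \<in> Dmax" "C \<ge> 0"
    and "real (\<Sum>\<rho>\<in>UNIV. k \<rho>) + C = real_of_int (\<Sum>\<rho>\<in>UNIV. a_coef gen \<sigma> \<rho> * int (k \<rho>))"
    and "\<And>i. \<bar>real_of_int (ray_sum k $ i)\<bar> \<le> gen_bound * C"
proof -
  obtain \<sigma> where \<sigma>: "\<sigma> \<in> Dmax" "rvec (- ray_sum k) \<in> cone_of gen \<sigma>"
    using exists_max_cone_containing by blast
  then obtain c where c: "\<forall>\<rho>\<in>\<sigma>. c \<rho> \<ge> 0" "rvec (- ray_sum k) = (\<Sum>\<rho>\<in>\<sigma>. c \<rho> *\<^sub>R rvec (gen \<rho>))"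
    by (rule in_cone_of_max_cone)
  define C where "C = (\<Sum>\<rho>\<in>\<sigma>. c \<rho>)"
  have "real_of_int (pair (m_sigma gen \<sigma>) (ray_sum k))
      = - (rvec (m_sigma gen \<sigma>) \<bullet> rvec (- ray_sum k))"
    by (simp add: rvec_uminus inner_rvec)
  also have "\<dots> = - C"
    unfolding c(2) inner_sum_right C_def using \<sigma>(1) by (simp add: inner_rvec pair_m_sigma)
  finally have "real (\<Sum>\<rho>\<in>UNIV. k \<rho>) + C = real_of_int (\<Sum>\<rho>\<in>UNIV. a_coef gen \<sigma> \<rho> * int (k \<rho>))"
    using arg_cong[OF sum_eq_a_coef_sum_plus_pair[of k \<sigma>], of real_of_int] by simp
  moreover have "\<bar>real_of_int (ray_sum k $ i)\<bar> \<le> gen_bound * C" for i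
  proof -
    have "\<bar>real_of_int (ray_sum k $ i)\<bar> = \<bar>\<Sum>\<rho>\<in>\<sigma>. c \<rho> * real_of_int (gen \<rho> $ i)\<bar>"
      using arg_cong[OF c(2), of "\<lambda>v. \<bar>v $ i\<bar>"] by (simp add: rvec_def)
    also have "\<dots> \<le> (\<Sum>\<rho>\<in>\<sigma>. c \<rho> * gen_bound)"
      using c(1) abs_gen_le_gen_bound
      by (intro order_trans[OF sum_abs] sum_mono) (simp add: abs_mult mult_left_mono)
    finally show ?thesis by (simp add: C_def sum_distrib_left mult.commute)
  qed
  moreover have "C \<ge> 0" unfolding C_def using c(1) by (simp add: sum_nonneg)
  ultimately show ?thesis using that \<sigma>(1) by blast
qed

text \<open>\<open>k \<in> dyadic_exponents L\<close> says that the corner \<open>(2^k\<^sub>\<rho>)\<^sub>\<rho>\<close> of the dyadic box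
  \<open>dyadic_box k\<close> satisfies \<open>X^D\<^sub>0(\<sigma>) \<le> 2^L\<close> for all maximal cones \<open>\<sigma>\<close>.\<close>
definition dyadic_exponents :: "nat \<Rightarrow> ('r \<Rightarrow> nat) set" where
  "dyadic_exponents L = {k. \<forall>\<sigma>\<in>Dmax. (\<Sum>\<rho>\<in>UNIV. a_coef gen \<sigma> \<rho> * int (k \<rho>)) \<le> int L}"

lemma dyadic_exponents_bounds:
  assumes "k \<in> dyadic_exponents L"
  shows "sum k UNIV \<le> L"
    and "\<bar>real_of_int (ray_sum k $ i)\<bar> \<le> gen_bound * (real L - real (sum k UNIV))"
proof -
  obtain \<sigma> C where "\<sigma> \<in> Dmax" "C \<ge> 0"
    and defect: "real (\<Sum>\<rho>\<in>UNIV. k \<rho>) + C = real_of_int (\<Sum>\<rho>\<in>UNIV. a_coef gen \<sigma> \<rho> * int (k \<rho>))"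
    and ray: "\<And>i. \<bar>real_of_int (ray_sum k $ i)\<bar> \<le> gen_bound * C"
    using exists_max_cone_defect[of k] by blast
  have "(\<Sum>\<rho>\<in>UNIV. a_coef gen \<sigma> \<rho> * int (k \<rho>)) \<le> int L"
    using assms \<open>\<sigma> \<in> Dmax\<close> unfolding dyadic_exponents_def by blast
  then have C_le: "C \<le> real L - real (sum k UNIV)"
    using defect by linarith
  then show "sum k UNIV \<le> L" using \<open>C \<ge> 0\<close> by linarith
  show "\<bar>real_of_int (ray_sum k $ i)\<bar> \<le> gen_bound * (real L - real (sum k UNIV))"
    using ray[of i] mult_left_mono[OF C_le] gen_bound_ge_1 by (meson order_trans zero_le_one)
qed

lemma ray_sum_cube_bound:
  assumes "k \<in> dyadic_exponents L"
  shows "\<bar>ray_sum k $ i\<bar> \<le> int (nat \<lceil>gen_bound\<rceil> * (L - sum k UNIV))"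
proof -
  have "\<bar>real_of_int (ray_sum k $ i)\<bar> \<le> gen_bound * (real L - real (sum k UNIV))"
    by (rule dyadic_exponents_bounds(2)[OF assms])
  also have "\<dots> \<le> real (nat \<lceil>gen_bound\<rceil>) * (real L - real (sum k UNIV))"
    using dyadic_exponents_bounds(1)[OF assms] real_nat_ceiling_ge[of gen_bound]
    by (intro mult_right_mono) (simp_all only: diff_ge_0_iff_ge of_nat_le_iff)
  also have "\<dots> = real (nat \<lceil>gen_bound\<rceil> * (L - sum k UNIV))"
    using dyadic_exponents_bounds(1)[OF assms] by simp
  finally show ?thesis by (metis of_int_abs of_int_le_iff of_int_of_nat_eq)
qed

lemma dyadic_exponents_le: "k \<in> dyadic_exponents L \<Longrightarrow> k \<rho> \<le> L"
  using dyadic_exponents_bounds(1)[of k L] member_le_sum[of \<rho> UNIV k] by fastforce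

lemma dyadic_exponents_subset_PiE: "dyadic_exponents L \<subseteq> PiE UNIV (\<lambda>_. {0..L})"
  using dyadic_exponents_le by auto

lemma finite_dyadic_exponents: "finite (dyadic_exponents L)"
  using dyadic_exponents_subset_PiE by (rule finite_subset) (auto intro: finite_PiE)

text \<open>The sum identity for \<open>\<sigma>0\<close> recovers \<open>k \<rho>1\<close>, since \<open>a\<^sub>\<rho>(\<sigma>0)\<close> vanishes on \<open>\<sigma>0\<close>;
  afterwards \<open>k\<close> and \<open>k'\<close> can only differ on \<open>\<sigma>0\<close>, whose rays form a lattice basis.\<close>
lemma exponents_eqI:
  assumes "\<sigma>0 \<in> Dmax" "\<rho>1 \<notin> \<sigma>0" "a_coef gen \<sigma>0 \<rho>1 \<noteq> 0"
    and "sum k UNIV = sum k' UNIV" "ray_sum k = ray_sum k'"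
    and outside: "\<And>\<rho>. \<rho> \<notin> \<sigma>0 \<Longrightarrow> \<rho> \<noteq> \<rho>1 \<Longrightarrow> k \<rho> = k' \<rho>"
  shows "k = k'"
proof -
  let ?a = "a_coef gen \<sigma>0"
  have "?a \<rho> * int (k \<rho>) = ?a \<rho> * int (k' \<rho>)" if "\<rho> \<noteq> \<rho>1" for \<rho>
    using outside[OF _ that] a_coef_eq_0[OF assms(1)] by (cases "\<rho> \<in> \<sigma>0") auto
  then have "(\<Sum>\<rho>\<in>UNIV - {\<rho>1}. ?a \<rho> * int (k \<rho>)) = (\<Sum>\<rho>\<in>UNIV - {\<rho>1}. ?a \<rho> * int (k' \<rho>))"
    by (intro sum.cong) auto
  moreover have "(\<Sum>\<rho>\<in>UNIV. ?a \<rho> * int (k \<rho>)) = (\<Sum>\<rho>\<in>UNIV. ?a \<rho> * int (k' \<rho>))"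
    using sum_eq_a_coef_sum_plus_pair[of k \<sigma>0] sum_eq_a_coef_sum_plus_pair[of k' \<sigma>0] assms(4,5)
    by simp
  ultimately have "?a \<rho>1 * int (k \<rho>1) = ?a \<rho>1 * int (k' \<rho>1)"
    by (simp add: sum.remove[of UNIV \<rho>1])
  then have outside': "k \<rho> = k' \<rho>" if "\<rho> \<notin> \<sigma>0" for \<rho>
    using outside[OF that] assms(3) by (cases "\<rho> = \<rho>1") auto
  have "(\<Sum>\<rho>\<in>UNIV. int (k \<rho>) *s gen \<rho>) = (\<Sum>\<rho>\<in>UNIV. int (k' \<rho>) *s gen \<rho>)"
    using assms(5) by (simp add: ray_sum_def)
  moreover have "(\<Sum>\<rho>\<in>UNIV - \<sigma>0. int (k \<rho>) *s gen \<rho>) = (\<Sum>\<rho>\<in>UNIV - \<sigma>0. int (k' \<rho>) *s gen \<rho>)"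
    using outside' by (intro sum.cong) auto
  ultimately have on_\<sigma>0: "(\<Sum>\<rho>\<in>\<sigma>0. int (k \<rho>) *s gen \<rho>) = (\<Sum>\<rho>\<in>\<sigma>0. int (k' \<rho>) *s gen \<rho>)"
    by (simp add: sum.subset_diff[of \<sigma>0 UNIV])
  have "k \<rho> = k' \<rho>" if "\<rho> \<in> \<sigma>0" for \<rho>
    using lattice_basis_coeffs_unique[OF lattice_basis_max_cone[OF assms(1)] _ on_\<sigma>0 that] by simp
  then show ?thesis using outside' by blast
qed

end

section \<open>Counting points in dyadic boxes\<close>

lemma int_cube_eq_image:
  "{u :: int ^ 'n. \<forall>i. \<bar>u $ i\<bar> \<le> int N} = vec_lambda ` PiE UNIV (\<lambda>_. {-int N..int N})"
proof (intro equalityI subsetI)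
  fix u :: "int ^ 'n" assume "u \<in> {u. \<forall>i. \<bar>u $ i\<bar> \<le> int N}"
  then have "vec_nth u \<in> PiE UNIV (\<lambda>_. {-int N..int N})"
    by (simp add: abs_le_iff minus_le_iff PiE_iff)
  then show "u \<in> vec_lambda ` PiE UNIV (\<lambda>_. {-int N..int N})" by (metis image_eqI vec_nth_inverse)
qed (auto simp: abs_le_iff minus_le_iff PiE_iff)

lemma card_int_cube:
  "card {u :: int ^ 'n. \<forall>i. \<bar>u $ i\<bar> \<le> int N} = (2 * N + 1) ^ CARD('n)"
proof -
  have "inj_on (vec_lambda :: ('n \<Rightarrow> int) \<Rightarrow> int ^ 'n) A" for A
    by (rule inj_onI) (simp add: vec_lambda_inject)
  then show ?thesis
    unfolding int_cube_eq_image by (simp add: card_image card_PiE nat_add_distrib nat_mult_distrib)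
qed

lemma finite_int_cube: "finite {u :: int ^ 'n. \<forall>i. \<bar>u $ i\<bar> \<le> int N}"
  unfolding int_cube_eq_image by (intro finite_imageI finite_PiE) auto

lemma pow_le_fact_mult_exp:
  fixes x :: real
  assumes "x \<ge> 0"
  shows "x ^ n \<le> fact n * exp x"
proof -
  have "(\<lambda>n. x ^ n / fact n) sums exp x"
    using exp_converges[of x] by (simp add: divide_inverse mult.commute)
  then have "x ^ n / fact n \<le> exp x"
    using sum_le_suminf[of "\<lambda>n. x ^ n / fact n" "{n}"] assms by (auto simp: sums_iff)
  then show ?thesis by (simp add: divide_le_eq mult.commute)
qed

text \<open>\<open>(a j + 1)\<^sup>n \<le> K (3/2)\<^sup>j\<close> (from \<open>x\<^sup>n \<le> n! e\<^sup>x\<close> at \<open>x = (j + 1) ln (3/2)\<close>), so after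
  factoring out \<open>2\<^sup>L\<close> the sum is dominated by a geometric series of ratio \<open>3/4\<close>.\<close>
lemma sum_pow2_mult_poly_le:
  "\<exists>C. \<forall>L. (\<Sum>t\<le>L. 2 ^ t * real ((a * (L - t) + 1) ^ n)) \<le> C * 2 ^ L"
proof -
  define s :: real where "s = ln (3 / 2)"
  have "s > 0" by (simp add: s_def)
  define K where "K = real ((a + 1) ^ n) * fact n / s ^ n * (3 / 2)"
  have poly_le: "real ((a * j + 1) ^ n) \<le> K * (3 / 2) ^ j" for j
  proof -
    have "real ((a * j + 1) ^ n) \<le> real ((a + 1) ^ n) * real (j + 1) ^ n"
      by (simp flip: power_mult_distrib add: power_mono algebra_simps)
    also have "real (j + 1) ^ n = (s * real (j + 1)) ^ n / s ^ n"
      using \<open>s > 0\<close> by (simp add: power_mult_distrib)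
    also have "\<dots> \<le> fact n * exp (s * real (j + 1)) / s ^ n"
      using \<open>s > 0\<close> by (intro divide_right_mono pow_le_fact_mult_exp) auto
    also have "exp (s * real (j + 1)) = (3 / 2) ^ (j + 1)"
      by (subst mult.commute, subst exp_of_nat_mult) (simp add: s_def)
    finally show ?thesis
      by (simp add: K_def mult_left_mono divide_right_mono mult_ac)
  qed
  have "(\<Sum>t\<le>L. 2 ^ t * real ((a * (L - t) + 1) ^ n)) \<le> 4 * K * 2 ^ L" for L
  proof -
    have "(\<Sum>t\<le>L. (2::real) ^ t * real ((a * (L - t) + 1) ^ n))
        = (\<Sum>j\<le>L. 2 ^ L * (real ((a * j + 1) ^ n) / 2 ^ j))"
      by (rule sum.reindex_bij_witness[where i = "\<lambda>j. L - j" and j = "\<lambda>t. L - t"])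
         (auto simp: power_diff)
    also have "\<dots> \<le> (\<Sum>j\<le>L. 2 ^ L * (K * ((3 / 2) ^ j / 2 ^ j)))"
      using poly_le by (intro sum_mono mult_left_mono) (simp_all add: divide_right_mono)
    also have "\<dots> = (\<Sum>j\<le>L. 2 ^ L * (K * (3 / 4) ^ j))"
      unfolding power_divide[symmetric] by simp
    also have "\<dots> = 2 ^ L * K * (\<Sum>j\<le>L. (3 / 4) ^ j)"
      by (simp add: sum_distrib_left mult.assoc)
    also have "\<dots> \<le> 2 ^ L * K * 4"
      using \<open>s > 0\<close>
      by (intro mult_left_mono) (simp_all add: K_def geometric_sum lessThan_Suc_atMost[symmetric])
    finally show ?thesis by (simp add: mult_ac)
  qed
  then show ?thesis by blast
qed

lemma floor_log2_bounds:
  fixes B :: real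
  assumes "B \<ge> exp 1"
  shows "2 ^ nat \<lfloor>log 2 B\<rfloor> \<le> B" and "real (nat \<lfloor>log 2 B\<rfloor>) + 1 \<le> 3 * ln B"
proof -
  have "B \<ge> 1" using assms exp_ge_add_one_self[of 1] by linarith
  have "B > 0" "ln B \<ge> 1"
    using assms exp_gt_zero[of 1] ln_exp[of 1] ln_le_cancel_iff[of "exp 1" B] by linarith+
  then have "log 2 B \<ge> 0" using \<open>B \<ge> 1\<close> by simp
  then have L: "real (nat \<lfloor>log 2 B\<rfloor>) \<le> log 2 B" by linarith
  have "(2::real) ^ nat \<lfloor>log 2 B\<rfloor> = 2 powr real (nat \<lfloor>log 2 B\<rfloor>)" by (simp add: powr_realpow)
  also have "\<dots> \<le> 2 powr log 2 B" using L by (intro powr_mono) auto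
  also have "\<dots> = B" using \<open>B > 0\<close> by simp
  finally show "2 ^ nat \<lfloor>log 2 B\<rfloor> \<le> B" .
  have "ln 2 \<ge> (1 / 2 :: real)"
    using ln_le_minus_one[of "1 / 2 :: real"] by (simp add: ln_div)
  then have "log 2 B \<le> 2 * ln B"
    using \<open>ln B \<ge> 1\<close> by (simp add: log_def divide_le_eq mult.commute mult_left_mono order_trans)
  then show "real (nat \<lfloor>log 2 B\<rfloor>) + 1 \<le> 3 * ln B" using L \<open>ln B \<ge> 1\<close> by linarith
qed

definition dyadic_box :: "('r::finite \<Rightarrow> nat) \<Rightarrow> ('r \<Rightarrow> nat) set" where
  "dyadic_box k = PiE UNIV (\<lambda>\<rho>. {2 ^ k \<rho> ..< 2 ^ Suc (k \<rho>)})"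

lemma card_dyadic_box: "card (dyadic_box k) = 2 ^ sum k UNIV"
  by (simp add: dyadic_box_def card_PiE power_sum)

lemma finite_dyadic_box: "finite (dyadic_box k)"
  by (simp add: dyadic_box_def finite_PiE)

lemma mem_dyadic_box_floor_log:
  assumes "\<forall>\<rho>. X \<rho> \<ge> 1"
  shows "X \<in> dyadic_box (\<lambda>\<rho>. floor_log (X \<rho>))"
proof -
  have "X \<rho> \<in> {2 ^ floor_log (X \<rho>) ..< 2 ^ Suc (floor_log (X \<rho>))}" for \<rho>
    using assms floor_log_exp2_le[of "X \<rho>"] floor_log_exp2_gt[of "X \<rho>"] by (simp add: Suc_le_eq)
  then show ?thesis unfolding dyadic_box_def by (simp only: PiE_UNIV_domain) blast
qed

context regular_fan
begin

lemma card_dyadic_exponents_slice_le: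
  assumes "\<sigma>0 \<in> Dmax" "\<rho>0 \<notin> \<sigma>0" "\<rho>1 \<notin> \<sigma>0" "\<rho>1 \<noteq> \<rho>0" "a_coef gen \<sigma>0 \<rho>1 \<noteq> 0"
  shows "card {k \<in> dyadic_exponents L. k \<rho>0 = 0 \<and> sum k UNIV = t}
    \<le> (2 * (nat \<lceil>gen_bound\<rceil> * (L - t)) + 1) ^ CARD('n) * (L + 1) ^ card (UNIV - \<sigma>0 - {\<rho>0, \<rho>1})"
proof -
  define rest where "rest = UNIV - \<sigma>0 - {\<rho>0, \<rho>1}"
  define S where "S = {k \<in> dyadic_exponents L. k \<rho>0 = 0 \<and> sum k UNIV = t}"
  define N where "N = nat \<lceil>gen_bound\<rceil> * (L - t)"
  define U where "U = {u :: int ^ 'n. \<forall>i. \<bar>u $ i\<bar> \<le> int N}"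
  define F where "F k = (ray_sum k, restrict k rest)" for k
  have "F k \<in> U \<times> PiE rest (\<lambda>_. {0..L})" if "k \<in> S" for k
    using that ray_sum_cube_bound dyadic_exponents_le by (auto simp: S_def F_def U_def N_def)
  then have "F ` S \<subseteq> U \<times> PiE rest (\<lambda>_. {0..L})" by blast
  moreover have "inj_on F S"
  proof (rule inj_onI)
    fix k k' assume "k \<in> S" "k' \<in> S" "F k = F k'"
    then have eq: "sum k UNIV = sum k' UNIV" "ray_sum k = ray_sum k'"
        "restrict k rest = restrict k' rest"
      and "k \<rho>0 = 0" "k' \<rho>0 = 0"
      by (auto simp: S_def F_def)
    have "k \<rho> = k' \<rho>" if "\<rho> \<notin> \<sigma>0" "\<rho> \<noteq> \<rho>1" for \<rho>
    proof (cases "\<rho> = \<rho>0")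
      case False
      then show ?thesis
        using fun_cong[OF eq(3), of \<rho>] that by (simp add: rest_def)
    qed (simp add: \<open>k \<rho>0 = 0\<close> \<open>k' \<rho>0 = 0\<close>)
    then show "k = k'" by (rule exponents_eqI[OF assms(1,3,5) eq(1,2)])
  qed
  ultimately have "card S \<le> card (U \<times> PiE rest (\<lambda>_. {0..L}))"
    using finite_int_cube
    by (intro card_inj_on_le[where f = F] finite_cartesian_product finite_PiE) (auto simp: U_def)
  also have "\<dots> = (2 * N + 1) ^ CARD('n) * (L + 1) ^ card rest"
    by (simp add: U_def card_int_cube card_cartesian_product card_PiE)
  finally show ?thesis by (simp add: S_def N_def rest_def)
qed

text \<open>Here \<open>\<Sum> a\<^sub>\<rho>(\<sigma>0) k\<^sub>\<rho> = 0\<close>, so the sum identity reads \<open>|k| = \<langle>m\<^sub>\<sigma>\<^sub>0, ray_sum k\<rangle>\<close>,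
  which is at most a constant multiple of \<open>L - |k|\<close>.\<close>
lemma dyadic_exponents_sum_le_degenerate:
  assumes "\<sigma>0 \<in> Dmax"
    and degenerate: "\<And>\<rho>. \<rho> \<notin> \<sigma>0 \<Longrightarrow> \<rho> \<noteq> \<rho>0 \<Longrightarrow> a_coef gen \<sigma>0 \<rho> = 0"
  obtains \<theta> where "0 \<le> \<theta>" "\<theta> < 1"
    and "\<And>L k. k \<in> dyadic_exponents L \<Longrightarrow> k \<rho>0 = 0 \<Longrightarrow> real (sum k UNIV) \<le> \<theta> * real L"
proof -
  define m0 where "m0 = m_sigma gen \<sigma>0"
  define P where "P = (\<Sum>i\<in>UNIV. \<bar>real_of_int (m0 $ i)\<bar>) * gen_bound"
  have "P \<ge> 0" unfolding P_def using gen_bound_ge_1 by (simp add: sum_nonneg)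
  have "real (sum k UNIV) \<le> P / (1 + P) * real L"
    if k: "k \<in> dyadic_exponents L" "k \<rho>0 = 0" for k L
  proof -
    have zero: "a_coef gen \<sigma>0 \<rho> * int (k \<rho>) = 0" for \<rho>
      using a_coef_eq_0[OF assms(1), of \<rho>] degenerate[of \<rho>] k(2)
      by (cases "\<rho> \<in> \<sigma>0"; cases "\<rho> = \<rho>0") auto
    have "(\<Sum>\<rho>\<in>UNIV. a_coef gen \<sigma>0 \<rho> * int (k \<rho>)) = 0" by (simp only: zero sum.neutral_const)
    then have "int (sum k UNIV) = pair m0 (ray_sum k)"
      using sum_eq_a_coef_sum_plus_pair[of k \<sigma>0] by (simp add: m0_def)
    then have "real (sum k UNIV) = real_of_int (pair m0 (ray_sum k))"
      by (metis of_int_of_nat_eq)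
    also have "\<dots> = (\<Sum>i\<in>UNIV. real_of_int (m0 $ i) * real_of_int (ray_sum k $ i))"
      by (simp add: pair_def)
    also have "\<dots> \<le> (\<Sum>i\<in>UNIV. \<bar>real_of_int (m0 $ i)\<bar> * (gen_bound * (real L - real (sum k UNIV))))"
    proof (rule sum_mono)
      fix i
      have "real_of_int (m0 $ i) * real_of_int (ray_sum k $ i)
          \<le> \<bar>real_of_int (m0 $ i)\<bar> * \<bar>real_of_int (ray_sum k $ i)\<bar>"
        by (metis abs_ge_self abs_mult)
      also have "\<dots> \<le> \<bar>real_of_int (m0 $ i)\<bar> * (gen_bound * (real L - real (sum k UNIV)))"
        using dyadic_exponents_bounds(2)[OF k(1)] by (intro mult_left_mono) auto
      finally show "real_of_int (m0 $ i) * real_of_int (ray_sum k $ i)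
          \<le> \<bar>real_of_int (m0 $ i)\<bar> * (gen_bound * (real L - real (sum k UNIV)))" .
    qed
    also have "\<dots> = P * (real L - real (sum k UNIV))"
      by (simp add: P_def sum_distrib_right mult.assoc)
    finally show ?thesis using \<open>P \<ge> 0\<close> by (simp add: field_simps)
  qed
  moreover have "0 \<le> P / (1 + P)" "P / (1 + P) < 1" using \<open>P \<ge> 0\<close> by auto
  ultimately show ?thesis using that by blast
qed

definition dyadic_volume :: "'r \<Rightarrow> nat \<Rightarrow> nat" where
  "dyadic_volume \<rho>0 L = (\<Sum>k \<in> {k \<in> dyadic_exponents L. k \<rho>0 = 0}. 2 ^ sum k UNIV)"

lemma dyadic_volume_le_generic:
  assumes "\<sigma>0 \<in> Dmax" "\<rho>0 \<notin> \<sigma>0" "\<rho>1 \<notin> \<sigma>0" "\<rho>1 \<noteq> \<rho>0" "a_coef gen \<sigma>0 \<rho>1 \<noteq> 0"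
  obtains C where
    "\<And>L. real (dyadic_volume \<rho>0 L) \<le> C * 2 ^ L * real (L + 1) ^ card (UNIV - \<sigma>0 - {\<rho>0, \<rho>1})"
proof -
  define p where "p = card (UNIV - \<sigma>0 - {\<rho>0, \<rho>1})"
  define M where "M = 2 * nat \<lceil>gen_bound\<rceil>"
  obtain C where C: "\<And>L. (\<Sum>t\<le>L. 2 ^ t * real ((M * (L - t) + 1) ^ CARD('n))) \<le> C * 2 ^ L"
    using sum_pow2_mult_poly_le by blast
  have "real (dyadic_volume \<rho>0 L) \<le> C * 2 ^ L * real (L + 1) ^ p" for L
  proof -
    define K0 where "K0 = {k \<in> dyadic_exponents L. k \<rho>0 = 0}"
    have "finite K0" using finite_dyadic_exponents by (simp add: K0_def)
    have "dyadic_volume \<rho>0 L = (\<Sum>t\<le>L. \<Sum>k\<in>{k \<in> K0. sum k UNIV = t}. 2 ^ sum k UNIV)"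
      unfolding dyadic_volume_def K0_def[symmetric] using \<open>finite K0\<close> dyadic_exponents_bounds(1)
      by (intro sum.group[symmetric]) (auto simp: K0_def)
    also have "\<dots> = (\<Sum>t\<le>L. 2 ^ t * card {k \<in> dyadic_exponents L. k \<rho>0 = 0 \<and> sum k UNIV = t})"
      by (intro sum.cong refl) (simp add: K0_def conj_assoc)
    also have "\<dots> \<le> (\<Sum>t\<le>L. 2 ^ t * ((M * (L - t) + 1) ^ CARD('n) * (L + 1) ^ p))"
      unfolding M_def p_def mult.assoc
      by (intro sum_mono mult_left_mono card_dyadic_exponents_slice_le[OF assms]) auto
    finally have "real (dyadic_volume \<rho>0 L)
        \<le> real (\<Sum>t\<le>L. 2 ^ t * ((M * (L - t) + 1) ^ CARD('n) * (L + 1) ^ p))"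
      by (simp only: of_nat_le_iff)
    also have "\<dots> = (\<Sum>t\<le>L. 2 ^ t * real ((M * (L - t) + 1) ^ CARD('n))) * real (L + 1) ^ p"
      by (simp only: of_nat_sum of_nat_mult of_nat_power of_nat_numeral
          sum_distrib_right mult.assoc)
    also have "\<dots> \<le> C * 2 ^ L * real (L + 1) ^ p"
      using C by (intro mult_right_mono) auto
    finally show ?thesis .
  qed
  then show ?thesis using that unfolding p_def by blast
qed

lemma dyadic_volume_le_degenerate:
  assumes "\<sigma>0 \<in> Dmax"
    and "\<And>\<rho>. \<rho> \<notin> \<sigma>0 \<Longrightarrow> \<rho> \<noteq> \<rho>0 \<Longrightarrow> a_coef gen \<sigma>0 \<rho> = 0"
  obtains \<theta> where "0 \<le> \<theta>" "\<theta> < 1"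
    and "\<And>L. real (dyadic_volume \<rho>0 L) \<le> real (L + 1) ^ CARD('r) * 2 powr (\<theta> * real L)"
proof -
  obtain \<theta> where \<theta>: "0 \<le> \<theta>" "\<theta> < 1"
    and sum_le: "\<And>L k. k \<in> dyadic_exponents L \<Longrightarrow> k \<rho>0 = 0 \<Longrightarrow> real (sum k UNIV) \<le> \<theta> * real L"
    using dyadic_exponents_sum_le_degenerate[OF assms] by blast
  have "real (dyadic_volume \<rho>0 L) \<le> real (L + 1) ^ CARD('r) * 2 powr (\<theta> * real L)" for L
  proof -
    define K0 where "K0 = {k \<in> dyadic_exponents L. k \<rho>0 = 0}"
    have "card K0 \<le> card (PiE (UNIV :: 'r set) (\<lambda>_. {0..L}))"
      using dyadic_exponents_subset_PiE by (intro card_mono) (auto simp: K0_def intro: finite_PiE)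
    then have "card K0 \<le> (L + 1) ^ CARD('r)" by (simp add: card_PiE)
    then have card_K0: "real (card K0) \<le> real (L + 1) ^ CARD('r)"
      by (metis of_nat_le_iff of_nat_power)
    have "real (dyadic_volume \<rho>0 L) = (\<Sum>k\<in>K0. 2 ^ sum k UNIV)"
      by (simp add: dyadic_volume_def K0_def)
    also have "\<dots> \<le> (\<Sum>k\<in>K0. 2 powr (\<theta> * real L))"
    proof (rule sum_mono)
      fix k assume "k \<in> K0"
      then have "2 powr real (sum k UNIV) \<le> 2 powr (\<theta> * real L)"
        using sum_le by (intro powr_mono) (auto simp: K0_def)
      then show "2 ^ sum k UNIV \<le> 2 powr (\<theta> * real L)"
        by (metis powr_realpow zero_less_numeral)
    qed
    also have "\<dots> \<le> real (L + 1) ^ CARD('r) * 2 powr (\<theta> * real L)"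
      using card_K0 by (simp add: mult_right_mono)
    finally show ?thesis .
  qed
  then show ?thesis using that \<theta> by blast
qed

lemma dyadic_volume_bigo_generic:
  assumes "\<sigma>0 \<in> Dmax" "\<rho>0 \<notin> \<sigma>0" "\<rho>1 \<notin> \<sigma>0" "\<rho>1 \<noteq> \<rho>0" "a_coef gen \<sigma>0 \<rho>1 \<noteq> 0"
  shows "(\<lambda>B. real (dyadic_volume \<rho>0 (nat \<lfloor>log 2 B\<rfloor>)))
           \<in> O(\<lambda>B. B * ln B powr (real CARD('r) - real CARD('n) - 2))"
proof -
  define p where "p = card (UNIV - \<sigma>0 - {\<rho>0, \<rho>1})"
  define r2 where "r2 = real CARD('r) - real CARD('n) - 2"
  have "card (UNIV - \<sigma>0 - {\<rho>0, \<rho>1}) + card (\<sigma>0 \<union> {\<rho>0, \<rho>1}) = CARD('r)"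
    by (subst card_Un_disjoint[symmetric]) (auto intro: arg_cong[where f = card])
  moreover have "card (\<sigma>0 \<union> {\<rho>0, \<rho>1}) = card \<sigma>0 + 2"
    using assms(2-4) by (subst card_Un_disjoint) auto
  ultimately have "real p \<le> r2"
    using dim_le_card_max_cone[OF assms(1)] by (simp add: p_def r2_def)
  obtain C where C: "\<And>L. real (dyadic_volume \<rho>0 L) \<le> C * 2 ^ L * real (L + 1) ^ p"
    using dyadic_volume_le_generic[OF assms] unfolding p_def by blast
  have "eventually (\<lambda>B. norm (real (dyadic_volume \<rho>0 (nat \<lfloor>log 2 B\<rfloor>)))
      \<le> (\<bar>C\<bar> * 3 ^ p) * norm (B * ln B powr r2)) at_top"
    using eventually_ge_at_top[of "exp 1"]
  proof eventually_elim
    case (elim B)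
    define L where "L = nat \<lfloor>log 2 B\<rfloor>"
    have "B > 0" "ln B \<ge> 1"
      using elim exp_gt_zero[of 1] ln_exp[of 1] ln_le_cancel_iff[of "exp 1" B] by linarith+
    have "real (dyadic_volume \<rho>0 L) \<le> \<bar>C\<bar> * 2 ^ L * real (L + 1) ^ p"
      using C[of L] by (smt (verit) mult_right_mono zero_le_power of_nat_0_le_iff)
    also have "\<dots> \<le> \<bar>C\<bar> * B * (3 * ln B) ^ p"
      using floor_log2_bounds[OF elim] \<open>B > 0\<close> unfolding L_def
      by (intro mult_mono power_mono mult_left_mono) auto
    also have "\<dots> = \<bar>C\<bar> * 3 ^ p * B * ln B powr real p"
      using \<open>ln B \<ge> 1\<close> by (simp add: power_mult_distrib powr_realpow)
    also have "\<dots> \<le> \<bar>C\<bar> * 3 ^ p * B * ln B powr r2"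
      using \<open>real p \<le> r2\<close> \<open>ln B \<ge> 1\<close> \<open>B > 0\<close> by (intro mult_left_mono powr_mono) auto
    finally show ?case
      using \<open>B > 0\<close> by (simp add: L_def mult_ac)
  qed
  then show ?thesis unfolding r2_def by (rule bigoI)
qed

lemma dyadic_volume_bigo_degenerate:
  assumes "\<sigma>0 \<in> Dmax"
    and "\<And>\<rho>. \<rho> \<notin> \<sigma>0 \<Longrightarrow> \<rho> \<noteq> \<rho>0 \<Longrightarrow> a_coef gen \<sigma>0 \<rho> = 0"
  shows "(\<lambda>B. real (dyadic_volume \<rho>0 (nat \<lfloor>log 2 B\<rfloor>)))
           \<in> O(\<lambda>B. B * ln B powr (real CARD('r) - real CARD('n) - 2))"
proof -
  obtain \<theta> where \<theta>: "0 \<le> \<theta>" "\<theta> < 1"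
    and vol: "\<And>L. real (dyadic_volume \<rho>0 L) \<le> real (L + 1) ^ CARD('r) * 2 powr (\<theta> * real L)"
    using dyadic_volume_le_degenerate[OF assms] by blast
  have "eventually (\<lambda>B. norm (real (dyadic_volume \<rho>0 (nat \<lfloor>log 2 B\<rfloor>)))
      \<le> 1 * norm ((3 * ln B) ^ CARD('r) * B powr \<theta>)) at_top"
    using eventually_ge_at_top[of "exp 1"]
  proof eventually_elim
    case (elim B)
    define L where "L = nat \<lfloor>log 2 B\<rfloor>"
    have "2 powr (\<theta> * real L) = (2 ^ L) powr \<theta>"
      by (simp add: powr_powr powr_realpow[symmetric] mult.commute)
    also have "\<dots> \<le> B powr \<theta>"
      using floor_log2_bounds(1)[OF elim] \<theta>(1) by (intro powr_mono2) (auto simp: L_def)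
    finally have "2 powr (\<theta> * real L) \<le> B powr \<theta>" .
    moreover have "real (L + 1) ^ CARD('r) \<le> (3 * ln B) ^ CARD('r)"
      using floor_log2_bounds(2)[OF elim] by (intro power_mono) (auto simp: L_def)
    ultimately have "real (dyadic_volume \<rho>0 L) \<le> (3 * ln B) ^ CARD('r) * B powr \<theta>"
      using vol[of L] by (meson mult_mono order_trans zero_le_power of_nat_0_le_iff powr_ge_zero)
    then show ?case by (simp add: L_def)
  qed
  then have "(\<lambda>B. real (dyadic_volume \<rho>0 (nat \<lfloor>log 2 B\<rfloor>)))
      \<in> O(\<lambda>B. (3 * ln B) ^ CARD('r) * B powr \<theta>)"
    by (rule bigoI)
  also have "(\<lambda>B. (3 * ln B) ^ CARD('r) * B powr \<theta>)
      \<in> O(\<lambda>B. B * ln B powr (real CARD('r) - real CARD('n) - 2))"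
    using \<theta>(2) by real_asymp
  finally show ?thesis .
qed

lemma dyadic_volume_bigo:
  "(\<lambda>B. real (dyadic_volume \<rho>0 (nat \<lfloor>log 2 B\<rfloor>)))
     \<in> O(\<lambda>B. B * ln B powr (real CARD('r) - real CARD('n) - 2))"
proof -
  obtain \<sigma>0 where "\<sigma>0 \<in> Dmax" "\<rho>0 \<notin> \<sigma>0" using exists_max_cone_avoiding by blast
  then show ?thesis
    using dyadic_volume_bigo_generic dyadic_volume_bigo_degenerate by blast
qed

lemma A_set_upd_1:
  assumes "X \<in> A_set gen Dmax B"
  shows "X(\<rho> := 1) \<in> A_set gen Dmax B"
proof -
  have X: "\<forall>\<tau>. X \<tau> \<ge> 1" "Max ((\<lambda>\<sigma>. monD0 gen \<sigma> X) ` Dmax) \<le> B"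
    using assms by (auto simp: A_set_def)
  have "monD0 gen \<sigma> (X(\<rho> := 1)) \<le> B" if "\<sigma> \<in> Dmax" for \<sigma>
  proof -
    have "monD0 gen \<sigma> (X(\<rho> := 1)) \<le> monD0 gen \<sigma> X"
      unfolding monD0_def using X(1) by (intro prod_mono) (auto intro: power_mono)
    also have "\<dots> \<le> Max ((\<lambda>\<sigma>. monD0 gen \<sigma> X) ` Dmax)"
      using finite_max_cones that by (intro Max_ge) auto
    finally show ?thesis using X(2) by simp
  qed
  then show ?thesis
    using X(1) finite_max_cones max_cones_nonempty by (simp add: A_set_def)
qed

end

locale gg_fan = regular_fan gen Dmax
  for gen :: "'r::finite \<Rightarrow> int ^ 'n::finite" and Dmax :: "'r set set" +
  assumes gg: "anticanonical_gg gen Dmax"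
begin

lemma a_coef_nonneg: "\<sigma> \<in> Dmax \<Longrightarrow> a_coef gen \<sigma> \<rho> \<ge> 0"
  using gg pair_m_sigma by (simp add: a_coef_def anticanonical_gg_def)

lemma floor_log_mem_dyadic_exponents:
  assumes "X \<in> A_set gen Dmax B"
  shows "(\<lambda>\<rho>. floor_log (X \<rho>)) \<in> dyadic_exponents (nat \<lfloor>log 2 B\<rfloor>)"
proof -
  define k where "k \<rho> = floor_log (X \<rho>)" for \<rho>
  have X: "\<forall>\<rho>. X \<rho> \<ge> 1" "Max ((\<lambda>\<sigma>. monD0 gen \<sigma> X) ` Dmax) \<le> B"
    using assms by (auto simp: A_set_def)
  have "(\<Sum>\<rho>\<in>UNIV. a_coef gen \<sigma> \<rho> * int (k \<rho>)) \<le> int (nat \<lfloor>log 2 B\<rfloor>)" if "\<sigma> \<in> Dmax" for \<sigma>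
  proof -
    define S where "S = (\<Sum>\<rho>\<in>UNIV. k \<rho> * nat (a_coef gen \<sigma> \<rho>))"
    have "(2::real) ^ S = (\<Prod>\<rho>\<in>UNIV. (2 ^ k \<rho>) ^ nat (a_coef gen \<sigma> \<rho>))"
      by (simp add: S_def power_sum power_mult)
    also have "\<dots> \<le> (\<Prod>\<rho>\<in>UNIV. real (X \<rho>) ^ nat (a_coef gen \<sigma> \<rho>))"
    proof (intro prod_mono conjI power_mono)
      fix \<rho>
      have "2 ^ k \<rho> \<le> X \<rho>"
        unfolding k_def using X(1) by (intro floor_log_exp2_le) (simp add: Suc_le_eq)
      then show "(2::real) ^ k \<rho> \<le> real (X \<rho>)" by (metis of_nat_le_iff of_nat_numeral of_nat_power)
    qed auto
    also have "\<dots> \<le> Max ((\<lambda>\<sigma>. monD0 gen \<sigma> X) ` Dmax)"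
      using finite_max_cones that by (intro Max_ge) (auto simp: monD0_def)
    finally have "2 ^ S \<le> B" using X(2) by simp
    moreover from this have "B > 0" by (meson less_le_trans zero_less_numeral zero_less_power)
    ultimately have "real S \<le> log 2 B"
      using le_log_iff[of 2 B "real S"] by (simp add: powr_realpow)
    have "a_coef gen \<sigma> \<rho> * int (k \<rho>) = int (k \<rho> * nat (a_coef gen \<sigma> \<rho>))" for \<rho>
      using a_coef_nonneg[OF that, of \<rho>] by simp
    then have "(\<Sum>\<rho>\<in>UNIV. a_coef gen \<sigma> \<rho> * int (k \<rho>)) = int S"
      by (simp only: S_def of_nat_sum)
    with \<open>real S \<le> log 2 B\<close> show ?thesis by linarith
  qed
  then show ?thesis by (simp add: dyadic_exponents_def k_def)
qed

lemma A_set_subset_dyadic_boxes: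
  "{X \<in> A_set gen Dmax B. P X}
     \<subseteq> (\<Union>k \<in> {k \<in> dyadic_exponents (nat \<lfloor>log 2 B\<rfloor>). \<exists>X. P X \<and> k = (\<lambda>\<rho>. floor_log (X \<rho>))}.
           dyadic_box k)"
proof
  fix X assume X: "X \<in> {X \<in> A_set gen Dmax B. P X}"
  then have "X \<in> dyadic_box (\<lambda>\<rho>. floor_log (X \<rho>))"
    by (intro mem_dyadic_box_floor_log) (simp add: A_set_def)
  then show "X \<in> (\<Union>k \<in> {k \<in> dyadic_exponents (nat \<lfloor>log 2 B\<rfloor>).
                            \<exists>X. P X \<and> k = (\<lambda>\<rho>. floor_log (X \<rho>))}. dyadic_box k)"
    using X floor_log_mem_dyadic_exponents by blast
qed

lemma finite_A_set: "finite (A_set gen Dmax B)"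
proof -
  have "A_set gen Dmax B \<subseteq> (\<Union>k \<in> dyadic_exponents (nat \<lfloor>log 2 B\<rfloor>). dyadic_box k)"
    using A_set_subset_dyadic_boxes[of B "\<lambda>_. True"] by auto
  then show ?thesis
    by (rule finite_subset) (simp add: finite_dyadic_exponents finite_dyadic_box)
qed

lemma card_A_set_slice_le:
  "card {X \<in> A_set gen Dmax B. X \<rho>0 = 1} \<le> dyadic_volume \<rho>0 (nat \<lfloor>log 2 B\<rfloor>)"
proof -
  define K0 where "K0 = {k \<in> dyadic_exponents (nat \<lfloor>log 2 B\<rfloor>). k \<rho>0 = 0}"
  have "finite K0" by (simp add: K0_def finite_dyadic_exponents)
  have "{X \<in> A_set gen Dmax B. X \<rho>0 = 1} \<subseteq> (\<Union>k \<in> K0. dyadic_box k)"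
    using A_set_subset_dyadic_boxes[of B "\<lambda>X. X \<rho>0 = 1"] unfolding K0_def by fastforce
  then have "card {X \<in> A_set gen Dmax B. X \<rho>0 = 1} \<le> card (\<Union>k \<in> K0. dyadic_box k)"
    using \<open>finite K0\<close> by (intro card_mono) (auto simp: finite_dyadic_box)
  also have "\<dots> \<le> (\<Sum>k \<in> K0. card (dyadic_box k))" by (rule card_UN_le[OF \<open>finite K0\<close>])
  finally show ?thesis by (simp add: dyadic_volume_def K0_def card_dyadic_box)
qed

lemma card_A_set_slice_bigo:
  "(\<lambda>B. real (card {X \<in> A_set gen Dmax B. X \<rho>0 = 1}))
     \<in> O(\<lambda>B. B * ln B powr (real CARD('r) - real CARD('n) - 2))"
proof -
  have "(\<lambda>B. real (card {X \<in> A_set gen Dmax B. X \<rho>0 = 1}))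
      \<in> O(\<lambda>B. real (dyadic_volume \<rho>0 (nat \<lfloor>log 2 B\<rfloor>)))"
    using card_A_set_slice_le by (intro landau_o.big_mono always_eventually) simp
  then show ?thesis using landau_o.big_trans dyadic_volume_bigo by blast
qed

lemma card_A_phi_le:
  assumes "is_mpoly \<phi>" "\<exists>\<alpha>. \<phi> \<alpha> \<noteq> 0"
  shows "card (A_phi gen Dmax \<phi> B)
           \<le> mpoly_degree \<phi> * (\<Sum>\<rho>\<in>UNIV. card {X \<in> A_set gen Dmax B. X \<rho> = 1})"
  unfolding A_phi_def using finite_A_set A_set_upd_1 assms by (rule card_mpoly_zeros_le)

lemma sum_card_A_set_slices_le:
  "\<exists>C>0. \<exists>B0. \<forall>B\<ge>B0. (\<Sum>\<rho>\<in>UNIV. real (card {X \<in> A_set gen Dmax B. X \<rho> = 1}))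
                          \<le> C * (B * ln B powr (real CARD('r) - real CARD('n) - 2))"
proof -
  have "(\<lambda>B. \<Sum>\<rho>\<in>UNIV. real (card {X \<in> A_set gen Dmax B. X \<rho> = 1}))
      \<in> O(\<lambda>B. B * ln B powr (real CARD('r) - real CARD('n) - 2))"
    by (intro big_sum_in_bigo card_A_set_slice_bigo)
  then obtain C where "C > 0" and bound: "eventually (\<lambda>B.
      norm (\<Sum>\<rho>\<in>UNIV. real (card {X \<in> A_set gen Dmax B. X \<rho> = 1}))
      \<le> C * norm (B * ln B powr (real CARD('r) - real CARD('n) - 2))) at_top"
    by (rule landau_o.bigE)
  have "eventually (\<lambda>B. (\<Sum>\<rho>\<in>UNIV. real (card {X \<in> A_set gen Dmax B. X \<rho> = 1}))
      \<le> C * (B * ln B powr (real CARD('r) - real CARD('n) - 2))) at_top"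
    using bound eventually_ge_at_top[of 0] by eventually_elim (simp add: sum_nonneg)
  then show ?thesis using \<open>C > 0\<close> unfolding eventually_at_top_linorder by blast
qed

end

theorem proposition7p1:
  fixes gen :: "'r::finite \<Rightarrow> int ^ 'n::finite"
    and Dmax :: "'r set set"
  assumes "complete_regular_fan gen Dmax"
    and "projective_fan gen Dmax"
    and "anticanonical_gg gen Dmax"
  defines "r \<equiv> real CARD('r) - real CARD('n)"
  shows "\<exists>C B0. \<forall>(\<phi> :: ('r \<Rightarrow> nat) \<Rightarrow> int) B. is_mpoly \<phi> \<and> (\<exists>\<alpha>. \<phi> \<alpha> \<noteq> 0) \<and> B \<ge> B0 \<longrightarrow>
     real (card (A_phi gen Dmax \<phi> B))
       \<le> C * (B * ln B powr (r - 2) * ln (ln B) + real (mpoly_degree \<phi>) * B * ln B powr (r - 2))"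
proof -
  interpret gg_fan gen Dmax using assms(1,3) by unfold_locales
  obtain C B0 where "C > 0" and slices: "\<And>B. B \<ge> B0 \<Longrightarrow>
      (\<Sum>\<rho>\<in>UNIV. real (card {X \<in> A_set gen Dmax B. X \<rho> = 1})) \<le> C * (B * ln B powr (r - 2))"
    using sum_card_A_set_slices_le unfolding r_def by auto
  have "real (card (A_phi gen Dmax \<phi> B))
      \<le> C * (B * ln B powr (r - 2) * ln (ln B) + real (mpoly_degree \<phi>) * B * ln B powr (r - 2))"
    (is "_ \<le> ?bound") if "is_mpoly \<phi>" "\<exists>\<alpha>. \<phi> \<alpha> \<noteq> 0" "B \<ge> max B0 (exp 1)" for \<phi> B
  proof -
    have "B > 0" "ln (ln B) \<ge> 0"
      using that(3) exp_ge_add_one_self[of 1] ln_ge_zero_iff ln_ge_iff by auto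
    have "real (card (A_phi gen Dmax \<phi> B))
        \<le> real (mpoly_degree \<phi>) * (\<Sum>\<rho>\<in>UNIV. real (card {X \<in> A_set gen Dmax B. X \<rho> = 1}))"
      using card_A_phi_le[OF that(1,2), of B] by (simp flip: of_nat_sum of_nat_mult)
    also have "\<dots> \<le> C * (real (mpoly_degree \<phi>) * B * ln B powr (r - 2))"
      using mult_left_mono[OF slices[of B], of "real (mpoly_degree \<phi>)"] that(3)
      by (simp add: mult_ac)
    also have "\<dots> \<le> ?bound"
      using \<open>C > 0\<close> \<open>B > 0\<close> \<open>ln (ln B) \<ge> 0\<close> by (intro mult_left_mono) auto
    finally show ?thesis .
  qed
  then show ?thesis by blast
qed

end
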